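(* Let $\phi$ be a positive function on closed curves such that $\phi(c)\ge a\,\mathrm{len}(c)$ for every curve $c$, for some constant $a>0$. Let $C\in C^1(I;\mathbb R^n)$ be a homotopy whose curves $C(\cdot,v)$ are all immersed. Then $$\int_0^1\phi\big(C(\cdot,v)\big)\int_{S^1}|\pi_N\partial_vC|^2|\partial_\theta C|\,d\theta\,dv\;\ge\;a\Big(\int_I|\partial_vC\wedge\partial_\theta C|\,d\theta\,dv\Big)^2 .$$ (The right-hand integral is the area swept out by the homotopy; hence the energy of any homotopy between $c_0,c_1$ is bounded below by $a$ times the square of the infimum of swept areas.)
   Context: $S^1=\mathbb R/2\pi\mathbb Z$, $I=S^1\times[0,1]$; $\mathrm{len}(c)=\int_{S^1}|\dot c|\,d\theta$; $T=\partial_\theta C/|\partial_\theta C|$, $\pi_Nw=w-\langle w,T\rangle T$; for $V,W\in\mathbb R^n$, $|V\wedge W|^2=|V|^2|W|^2-\langle V,W\rangle^2$ (the norm of the vector of all $2\times2$ minors of the matrix with columns $V,W$). *)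

theory Defs
  imports "HOL-Analysis.Analysis"
begin

text \<open>Curves on S^1 = R/2piZ are represented as 2pi-periodic functions real => 'a.
  A homotopy C on I = S^1 x [0,1] is a function C theta v, 2pi-periodic in theta.\<close>

definition closed_C1_curve :: "(real \<Rightarrow> 'a::euclidean_space) \<Rightarrow> bool" where
  "closed_C1_curve c \<longleftrightarrow> (\<forall>\<theta>. c (\<theta> + 2*pi) = c \<theta>) \<and> c C1_differentiable_on UNIV"

definition len :: "(real \<Rightarrow> 'a::euclidean_space) \<Rightarrow> real" where
  "len c = integral {0..2*pi} (\<lambda>\<theta>. norm (vector_derivative c (at \<theta>)))"

definition dth :: "(real \<Rightarrow> real \<Rightarrow> 'a::euclidean_space) \<Rightarrow> real \<Rightarrow> real \<Rightarrow> 'a" where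
  "dth C \<theta> v = vector_derivative (\<lambda>t. C t v) (at \<theta>)"

definition dv :: "(real \<Rightarrow> real \<Rightarrow> 'a::euclidean_space) \<Rightarrow> real \<Rightarrow> real \<Rightarrow> 'a" where
  "dv C \<theta> v = vector_derivative (\<lambda>s. C \<theta> s) (at v within {0..1})"

definition C1_homotopy :: "(real \<Rightarrow> real \<Rightarrow> 'a::euclidean_space) \<Rightarrow> bool" where
  "C1_homotopy C \<longleftrightarrow>
     (\<forall>\<theta> v. C (\<theta> + 2*pi) v = C \<theta> v) \<and>
     (\<forall>\<theta>. \<forall>v\<in>{0..1}. (\<lambda>p. C (fst p) (snd p)) differentiable (at (\<theta>, v) within UNIV \<times> {0..1})) \<and>
     continuous_on (UNIV \<times> {0..1}) (\<lambda>p. dth C (fst p) (snd p)) \<and>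
     continuous_on (UNIV \<times> {0..1}) (\<lambda>p. dv C (fst p) (snd p))"

definition immersed_homotopy :: "(real \<Rightarrow> real \<Rightarrow> 'a::euclidean_space) \<Rightarrow> bool" where
  "immersed_homotopy C \<longleftrightarrow> (\<forall>\<theta>. \<forall>v\<in>{0..1}. dth C \<theta> v \<noteq> 0)"

definition unit_tangent :: "(real \<Rightarrow> real \<Rightarrow> 'a::euclidean_space) \<Rightarrow> real \<Rightarrow> real \<Rightarrow> 'a" where
  "unit_tangent C \<theta> v = (1 / norm (dth C \<theta> v)) *\<^sub>R dth C \<theta> v"

definition piN :: "'a::euclidean_space \<Rightarrow> 'a \<Rightarrow> 'a" where
  "piN T w = w - (w \<bullet> T) *\<^sub>R T"

definition wedge_norm :: "'a::euclidean_space \<Rightarrow> 'a \<Rightarrow> real" where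
  "wedge_norm V W = sqrt ((norm V)\<^sup>2 * (norm W)\<^sup>2 - (V \<bullet> W)\<^sup>2)"

definition normal_energy :: "(real \<Rightarrow> real \<Rightarrow> 'a::euclidean_space) \<Rightarrow> real \<Rightarrow> real" where
  "normal_energy C v = integral {0..2*pi}
     (\<lambda>\<theta>. (norm (piN (unit_tangent C \<theta> v) (dv C \<theta> v)))\<^sup>2 * norm (dth C \<theta> v))"

end

theory Submission
  imports Defs
begin

text \<open>Since \<open>|\<partial>\<^sub>vC \<and> \<partial>\<^sub>\<theta>C| = |\<pi>\<^sub>N \<partial>\<^sub>vC| |\<partial>\<^sub>\<theta>C|\<close>, the Cauchy-Schwarz inequality with weight
  \<open>|\<partial>\<^sub>\<theta>C|\<close> bounds the square of the area swept per unit of \<open>v\<close> by the normal energy of the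
  curve \<open>C(\<cdot>, v)\<close> times its length, and \<open>a\<close> times its length is at most \<open>\<phi>(C(\<cdot>, v))\<close>.
  Integrating in \<open>v\<close> and applying Cauchy-Schwarz once more on \<open>[0, 1]\<close>, together with
  Fubini's theorem for the swept area, gives the inequality.\<close>

lemma quadratic_nonneg_imp_discriminant_le:
  fixes A B L :: real
  assumes nonneg: "\<And>t. 0 \<le> t\<^sup>2 * A - 2 * t * B + L" and "A \<ge> 0"
  shows "B\<^sup>2 \<le> A * L"
proof (cases "A > 0")
  case True
  have "0 \<le> (B/A)\<^sup>2 * A - 2 * (B/A) * B + L" by (rule nonneg)
  also have "\<dots> = L - B\<^sup>2 / A" using True by (simp add: field_simps power2_eq_square)
  finally show ?thesis using True by (simp add: field_simps mult.commute)
next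
  case False
  then have A0: "A = 0" using \<open>A \<ge> 0\<close> by simp
  have "B = 0"
  proof (rule ccontr)
    assume "B \<noteq> 0"
    have "0 \<le> ((L+1)/(2*B))\<^sup>2 * A - 2 * ((L+1)/(2*B)) * B + L" by (rule nonneg)
    also have "\<dots> = -1" using A0 \<open>B \<noteq> 0\<close> by (simp add: field_simps)
    finally show False by simp
  qed
  then show ?thesis using A0 by simp
qed

lemma integral_weighted_Cauchy_Schwarz:
  fixes f h :: "'n::euclidean_space \<Rightarrow> real"
  assumes int_f2h: "(\<lambda>x. (f x)\<^sup>2 * h x) integrable_on S"
    and int_fh: "(\<lambda>x. f x * h x) integrable_on S"
    and int_h: "h integrable_on S"
    and h_nonneg: "\<And>x. x \<in> S \<Longrightarrow> h x \<ge> 0"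
  shows "(integral S (\<lambda>x. f x * h x))\<^sup>2 \<le> integral S (\<lambda>x. (f x)\<^sup>2 * h x) * integral S h"
proof (rule quadratic_nonneg_imp_discriminant_le)
  show "0 \<le> integral S (\<lambda>x. (f x)\<^sup>2 * h x)"
    by (rule integral_nonneg[OF int_f2h]) (simp add: h_nonneg)
  fix t :: real
  have "((\<lambda>x. t\<^sup>2 * ((f x)\<^sup>2 * h x) - 2 * t * (f x * h x) + h x) has_integral
     t\<^sup>2 * integral S (\<lambda>x. (f x)\<^sup>2 * h x) - 2 * t * integral S (\<lambda>x. f x * h x) + integral S h) S"
    by (intro has_integral_add has_integral_diff has_integral_mult_right integrable_integral
        int_f2h int_fh int_h)
  moreover have "t\<^sup>2 * ((f x)\<^sup>2 * h x) - 2 * t * (f x * h x) + h x = (t * f x - 1)\<^sup>2 * h x" for x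
    by (simp add: power2_eq_square algebra_simps)
  ultimately have "((\<lambda>x. (t * f x - 1)\<^sup>2 * h x) has_integral
     t\<^sup>2 * integral S (\<lambda>x. (f x)\<^sup>2 * h x) - 2 * t * integral S (\<lambda>x. f x * h x) + integral S h) S"
    by simp
  then show "0 \<le> t\<^sup>2 * integral S (\<lambda>x. (f x)\<^sup>2 * h x) - 2 * t * integral S (\<lambda>x. f x * h x)
      + integral S h"
    by (rule has_integral_nonneg) (simp add: h_nonneg)
qed

lemma wedge_norm_eq_norm_piN:
  fixes w V :: "'a::euclidean_space"
  assumes "V \<noteq> 0"
  shows "wedge_norm w V = norm (piN ((1 / norm V) *\<^sub>R V) w) * norm V"
proof -
  have nV: "norm V > 0" using assms by simp
  define T where "T = (1 / norm V) *\<^sub>R V"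
  have "T \<bullet> T = 1"
    using nV unfolding T_def by (simp add: power2_norm_eq_inner[symmetric] power2_eq_square)
  then have "(norm (piN T w))\<^sup>2 = (norm w)\<^sup>2 - (w \<bullet> T)\<^sup>2"
    unfolding piN_def power2_norm_eq_inner
    by (simp add: inner_diff_left inner_diff_right inner_commute algebra_simps power2_eq_square)
  also have "\<dots> = (norm w)\<^sup>2 - (w \<bullet> V)\<^sup>2 / (norm V)\<^sup>2"
    unfolding T_def by (simp add: power_divide)
  finally have "(norm (piN T w) * norm V)\<^sup>2 = (norm w)\<^sup>2 * (norm V)\<^sup>2 - (w \<bullet> V)\<^sup>2"
    using nV by (simp add: power_mult_distrib field_simps)
  then show ?thesis unfolding wedge_norm_def T_def[symmetric]
    by (metis abs_of_nonneg mult_nonneg_nonneg norm_ge_zero real_sqrt_abs)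
qed

definition swept_area_rate :: "(real \<Rightarrow> real \<Rightarrow> 'a::euclidean_space) \<Rightarrow> real \<Rightarrow> real" where
  "swept_area_rate C v = integral {0..2*pi} (\<lambda>\<theta>. wedge_norm (dv C \<theta> v) (dth C \<theta> v))"

lemma continuous_on_slice:
  assumes "continuous_on (UNIV \<times> {0..1}) g" and "v \<in> {0..1::real}"
  shows "continuous_on S (\<lambda>\<theta>::real. g (\<theta>, v))"
  by (rule continuous_on_compose2[OF assms(1)]) (use assms(2) in \<open>auto intro!: continuous_intros\<close>)

lemma C1_homotopy_closed_C1_curve:
  assumes C1: "C1_homotopy C" and v: "v \<in> {0..1}"
  shows "closed_C1_curve (\<lambda>\<theta>. C \<theta> v)"
  unfolding closed_C1_curve_def C1_differentiable_on_def
proof (intro conjI allI exI[of _ "\<lambda>\<theta>. dth C \<theta> v"] ballI)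
  show "C (\<theta> + 2 * pi) v = C \<theta> v" for \<theta>
    using C1 by (simp add: C1_homotopy_def)
  show "continuous_on UNIV (\<lambda>\<theta>. dth C \<theta> v)"
    using continuous_on_slice[of "\<lambda>p. dth C (fst p) (snd p)"] C1 v by (simp add: C1_homotopy_def)
  fix \<theta> :: real
  have "(\<lambda>p. C (fst p) (snd p)) differentiable at (\<theta>, v) within UNIV \<times> {0..1}"
    using C1 v by (simp add: C1_homotopy_def)
  then have "(\<lambda>p. C (fst p) (snd p)) differentiable at (\<theta>, v) within range (\<lambda>t. (t, v))"
    by (rule differentiable_within_subset) (use v in auto)
  then have "((\<lambda>p. C (fst p) (snd p)) \<circ> (\<lambda>t. (t, v))) differentiable at \<theta>"
    by (intro differentiable_chain_within derivative_intros)
  then have "(\<lambda>t. C t v) differentiable at \<theta>" by (simp add: o_def)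
  then show "((\<lambda>t. C t v) has_vector_derivative dth C \<theta> v) (at \<theta>)"
    by (simp add: dth_def vector_derivative_works[symmetric])
qed

lemma C1_homotopy_continuous_swept_area_density:
  assumes "C1_homotopy C"
  shows "continuous_on (UNIV \<times> {0..1}) (\<lambda>p. wedge_norm (dv C (fst p) (snd p)) (dth C (fst p) (snd p)))"
  using assms unfolding C1_homotopy_def wedge_norm_def by (auto intro!: continuous_intros)

lemma C1_homotopy_continuous_swept_area_rate:
  assumes "C1_homotopy C"
  shows "continuous_on {0..1} (swept_area_rate C)"
proof -
  have "continuous_on ({0..1} \<times> cbox 0 (2*pi))
          (\<lambda>(v, \<theta>). wedge_norm (dv C \<theta> v) (dth C \<theta> v))"
    using continuous_on_compose2[OF C1_homotopy_continuous_swept_area_density[OF assms]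
        continuous_on_swap[of "{0..1} \<times> cbox 0 (2*pi)"]]
    by (simp add: case_prod_unfold image_subset_iff)
  from integral_continuous_on_param[OF this] show ?thesis
    by (simp add: swept_area_rate_def)
qed

lemma C1_homotopy_integral_swept_area:
  assumes "C1_homotopy C"
  shows "integral ({0..2*pi} \<times> {0..1}) (\<lambda>p. wedge_norm (dv C (fst p) (snd p)) (dth C (fst p) (snd p)))
    = integral {0..1} (swept_area_rate C)"
proof -
  define W where "W = (\<lambda>p. wedge_norm (dv C (fst p) (snd p)) (dth C (fst p) (snd p)))"
  have W_cont: "continuous_on (cbox (0, 0) (2*pi, 1)) W"
    unfolding W_def using C1_homotopy_continuous_swept_area_density[OF assms]
    by (rule continuous_on_subset) (auto simp: cbox_Pair_eq)
  have "integral (cbox (0, 0) (2*pi, 1)) W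
      = integral (cbox 0 (2*pi)) (\<lambda>\<theta>. integral (cbox 0 1) (\<lambda>v. W (\<theta>, v)))"
    by (rule integral_prod_continuous[OF W_cont])
  also have "\<dots> = integral (cbox 0 1) (\<lambda>v. integral (cbox 0 (2*pi)) (\<lambda>\<theta>. W (\<theta>, v)))"
    by (rule integral_swap_continuous) (use W_cont in simp)
  finally show ?thesis
    by (simp add: W_def swept_area_rate_def[abs_def] cbox_Pair_eq)
qed

lemma normal_energy_nonneg: "normal_energy C v \<ge> 0"
  unfolding normal_energy_def
  by (cases "(\<lambda>\<theta>. (norm (piN (unit_tangent C \<theta> v) (dv C \<theta> v)))\<^sup>2 * norm (dth C \<theta> v))
        integrable_on {0..2*pi}") (simp_all add: integral_nonneg not_integrable_integral)

lemma swept_area_rate_sq_le_normal_energy_len: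
  assumes C1: "C1_homotopy C" and imm: "immersed_homotopy C" and v: "v \<in> {0..1}"
  shows "(swept_area_rate C v)\<^sup>2 \<le> normal_energy C v * len (\<lambda>\<theta>. C \<theta> v)"
proof -
  define P where "P = (\<lambda>\<theta>. norm (piN (unit_tangent C \<theta> v) (dv C \<theta> v)))"
  define L where "L = (\<lambda>\<theta>. norm (dth C \<theta> v))"
  have dth_cont: "continuous_on {0..2*pi} (\<lambda>\<theta>. dth C \<theta> v)"
    and dv_cont: "continuous_on {0..2*pi} (\<lambda>\<theta>. dv C \<theta> v)"
    using C1 v continuous_on_slice[of "\<lambda>p. dth C (fst p) (snd p)"]
      continuous_on_slice[of "\<lambda>p. dv C (fst p) (snd p)"]
    by (simp_all add: C1_homotopy_def)
  have dth_nz: "dth C \<theta> v \<noteq> 0" for \<theta>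
    using imm v by (simp add: immersed_homotopy_def)
  then have P_cont: "continuous_on {0..2*pi} P" and L_cont: "continuous_on {0..2*pi} L"
    unfolding P_def L_def unit_tangent_def piN_def
    by (auto intro!: continuous_intros dth_cont dv_cont)
  have "swept_area_rate C v = integral {0..2*pi} (\<lambda>\<theta>. P \<theta> * L \<theta>)"
    unfolding swept_area_rate_def P_def L_def unit_tangent_def
    by (intro integral_cong wedge_norm_eq_norm_piN dth_nz)
  also have "(\<dots>)\<^sup>2 \<le> integral {0..2*pi} (\<lambda>\<theta>. (P \<theta>)\<^sup>2 * L \<theta>) * integral {0..2*pi} L"
    by (intro integral_weighted_Cauchy_Schwarz integrable_continuous_real continuous_intros
        P_cont L_cont) (simp add: L_def)
  finally show ?thesis
    by (simp add: normal_energy_def len_def P_def L_def dth_def)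
qed

theorem mainTheorem11:
  fixes \<phi> :: "(real \<Rightarrow> 'a::euclidean_space) \<Rightarrow> real"
    and C :: "real \<Rightarrow> real \<Rightarrow> 'a"
    and a :: real
  assumes a_pos: "a > 0"
    and phi_pos: "\<And>c. closed_C1_curve c \<Longrightarrow> \<phi> c > 0"
    and phi_len: "\<And>c. closed_C1_curve c \<Longrightarrow> \<phi> c \<ge> a * len c"
    and C1: "C1_homotopy C"
    and imm: "immersed_homotopy C"
    and intble: "(\<lambda>v. \<phi> (\<lambda>\<theta>. C \<theta> v) * normal_energy C v) integrable_on {0..1}"
  shows "integral {0..1} (\<lambda>v. \<phi> (\<lambda>\<theta>. C \<theta> v) * normal_energy C v)
           \<ge> a * (integral ({0..2*pi} \<times> {0..1})
                    (\<lambda>p. wedge_norm (dv C (fst p) (snd p)) (dth C (fst p) (snd p))))\<^sup>2"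
proof -
  let ?w = "swept_area_rate C"
  have w_cont: "continuous_on {0..1} ?w"
    by (rule C1_homotopy_continuous_swept_area_rate[OF C1])
  have pointwise: "a * (?w v)\<^sup>2 \<le> \<phi> (\<lambda>\<theta>. C \<theta> v) * normal_energy C v" if v: "v \<in> {0..1}" for v
  proof -
    have "a * (?w v)\<^sup>2 \<le> normal_energy C v * (a * len (\<lambda>\<theta>. C \<theta> v))"
      using swept_area_rate_sq_le_normal_energy_len[OF C1 imm v] a_pos by simp
    also have "\<dots> \<le> normal_energy C v * \<phi> (\<lambda>\<theta>. C \<theta> v)"
      by (intro mult_left_mono phi_len C1_homotopy_closed_C1_curve[OF C1 v] normal_energy_nonneg)
    finally show ?thesis by (simp add: mult.commute)
  qed
  have "(integral {0..1} ?w)\<^sup>2 \<le> integral {0..1} (\<lambda>v. (?w v)\<^sup>2)"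
    using integral_weighted_Cauchy_Schwarz[of ?w "\<lambda>_. 1" "{0..1}"]
    by (simp add: integrable_continuous_real continuous_intros w_cont)
  then have "a * (integral {0..1} ?w)\<^sup>2 \<le> integral {0..1} (\<lambda>v. a * (?w v)\<^sup>2)"
    using a_pos by simp
  also have "\<dots> \<le> integral {0..1} (\<lambda>v. \<phi> (\<lambda>\<theta>. C \<theta> v) * normal_energy C v)"
    by (intro integral_le intble pointwise integrable_continuous_real continuous_intros w_cont)
  finally show ?thesis
    by (simp add: C1_homotopy_integral_swept_area[OF C1])
qed

end
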